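(* The polynomials in $S(\mathfrak h)^{W_I}$ separate the points $\widetilde\lambda$, $\lambda\in P_I^+$: for all $\lambda\neq\lambda'$ in $P_I^+$ there exists $q\in S(\mathfrak h)^{W_I}$ with $q(\widetilde\lambda)\neq q(\widetilde{\lambda'})$.
   Context: Let $\mathfrak a$ be a Euclidean space with inner product $(\cdot,\cdot)$, $\mathfrak h=\mathfrak a\otimes\mathbb C$, and $S(\mathfrak h)$ the symmetric algebra, viewed as polynomial functions on $\mathfrak h^*$. Let $R\subset\mathfrak a^*$ be a root system with Weyl group $W$ (acting on $\mathfrak h$ and $S(\mathfrak h)$), positive roots $R^+$, simple reflections $S$. Let $P$ be the weight lattice, $P^+$ the dominant weights and $P^-=-P^+$. Let $k=(k_\alpha)_{\alpha\in R}$ be a $W$-invariant multiplicity function with $k_\alpha\ge0$ and $\rho(k)=\frac12\sum_{\alpha\in R^+}k_\alpha\alpha$. For $\lambda\in P$ let $v(\lambda)$ be the minimal length element of $W$ with $v(\lambda)\lambda\in P^-$ and $\widetilde\lambda=\lambda-v(\lambda)^{-1}\rho(k)$. Let $I\subset S$, $W_I$ the parabolic subgroup generated by $I$, $R_I^+$ its positive roots and $P_I^+=\{\lambda\in P:(\lambda,\alpha)\ge0\ \forall\alpha\in R_I^+\}$. *)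

theory Defs
  imports "HOL-Analysis.Analysis"
begin

text \<open>We identify the real form a (and its dual a* via the inner product) with a
Euclidean space 'a. Roots, weights are vectors of 'a.\<close>

definition refl :: "'a::euclidean_space \<Rightarrow> 'a \<Rightarrow> 'a" where
  "refl \<alpha> x = x - (2 * (x \<bullet> \<alpha>) / (\<alpha> \<bullet> \<alpha>)) *\<^sub>R \<alpha>"

text \<open>(Possibly non-reduced) crystallographic root system spanning the space.\<close>
definition root_system :: "'a::euclidean_space set \<Rightarrow> bool" where
  "root_system R \<longleftrightarrow> finite R \<and> 0 \<notin> R \<and> span R = UNIV \<and>
     (\<forall>\<alpha>\<in>R. refl \<alpha> ` R = R) \<and>
     (\<forall>\<alpha>\<in>R. \<forall>\<beta>\<in>R. 2 * (\<beta> \<bullet> \<alpha>) / (\<alpha> \<bullet> \<alpha>) \<in> \<int>)"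

inductive_set refl_group :: "'a::euclidean_space set \<Rightarrow> ('a \<Rightarrow> 'a) set" for A where
  id: "id \<in> refl_group A"
| step: "w \<in> refl_group A \<Longrightarrow> \<alpha> \<in> A \<Longrightarrow> refl \<alpha> \<circ> w \<in> refl_group A"

abbreviation weyl_group :: "'a::euclidean_space set \<Rightarrow> ('a \<Rightarrow> 'a) set" where
  "weyl_group R \<equiv> refl_group R"

text \<open>Positive system determined by a regular element h (every positive system arises so).\<close>
definition pos_roots :: "'a::euclidean_space set \<Rightarrow> 'a \<Rightarrow> 'a set" where
  "pos_roots R h = {\<alpha>\<in>R. \<alpha> \<bullet> h > 0}"

definition simple_roots :: "'a::euclidean_space set \<Rightarrow> 'a \<Rightarrow> 'a set" where
  "simple_roots R h = {\<alpha>\<in>pos_roots R h.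
      \<not> (\<exists>\<beta>\<in>pos_roots R h. \<exists>\<gamma>\<in>pos_roots R h. \<alpha> = \<beta> + \<gamma>)}"

definition weight_lattice :: "'a::euclidean_space set \<Rightarrow> 'a set" where
  "weight_lattice R = {l. \<forall>\<alpha>\<in>R. 2 * (l \<bullet> \<alpha>) / (\<alpha> \<bullet> \<alpha>) \<in> \<int>}"

definition dominant :: "'a::euclidean_space set \<Rightarrow> 'a \<Rightarrow> 'a set" where
  "dominant R h = {l\<in>weight_lattice R. \<forall>\<alpha>\<in>pos_roots R h. l \<bullet> \<alpha> \<ge> 0}"

definition antidominant :: "'a::euclidean_space set \<Rightarrow> 'a \<Rightarrow> 'a set" where
  "antidominant R h = uminus ` dominant R h"

definition weyl_length :: "'a::euclidean_space set \<Rightarrow> 'a \<Rightarrow> ('a \<Rightarrow> 'a) \<Rightarrow> nat" where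
  "weyl_length R h w = (LEAST n. \<exists>as. length as = n \<and> set as \<subseteq> simple_roots R h \<and>
      w = foldr (\<lambda>\<alpha> f. refl \<alpha> \<circ> f) as id)"

definition vmin :: "'a::euclidean_space set \<Rightarrow> 'a \<Rightarrow> 'a \<Rightarrow> ('a \<Rightarrow> 'a)" where
  "vmin R h l = (THE w. w \<in> weyl_group R \<and> w l \<in> antidominant R h \<and>
      (\<forall>w'\<in>weyl_group R. w' l \<in> antidominant R h \<longrightarrow> weyl_length R h w \<le> weyl_length R h w'))"

definition rho :: "'a::euclidean_space set \<Rightarrow> 'a \<Rightarrow> ('a \<Rightarrow> real) \<Rightarrow> 'a" where
  "rho R h k = (1/2) *\<^sub>R (\<Sum>\<alpha>\<in>pos_roots R h. k \<alpha> *\<^sub>R \<alpha>)"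

definition multiplicity :: "'a::euclidean_space set \<Rightarrow> ('a \<Rightarrow> real) \<Rightarrow> bool" where
  "multiplicity R k \<longleftrightarrow> (\<forall>\<alpha>\<in>R. k \<alpha> \<ge> 0) \<and>
     (\<forall>w\<in>weyl_group R. \<forall>\<alpha>\<in>R. k (w \<alpha>) = k \<alpha>)"

definition shifted :: "'a::euclidean_space set \<Rightarrow> 'a \<Rightarrow> ('a \<Rightarrow> real) \<Rightarrow> 'a \<Rightarrow> 'a" where
  "shifted R h k l = l - inv (vmin R h l) (rho R h k)"

text \<open>S(h), h = a (x) C, as complex polynomial functions on h*; restricted to the real
form a* (= 'a via the inner product), which determines the polynomial.\<close>
inductive_set poly_fun :: "('a::euclidean_space \<Rightarrow> complex) set" where
  const: "(\<lambda>x. c) \<in> poly_fun"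
| lin: "(\<lambda>x. complex_of_real (x \<bullet> v)) \<in> poly_fun"
| add: "p \<in> poly_fun \<Longrightarrow> q \<in> poly_fun \<Longrightarrow> (\<lambda>x. p x + q x) \<in> poly_fun"
| mult: "p \<in> poly_fun \<Longrightarrow> q \<in> poly_fun \<Longrightarrow> (\<lambda>x. p x * q x) \<in> poly_fun"

definition parabolic_pos_roots :: "'a::euclidean_space set \<Rightarrow> 'a \<Rightarrow> 'a set \<Rightarrow> 'a set" where
  "parabolic_pos_roots R h I = pos_roots R h \<inter> span I"

definition parabolic_dominant :: "'a::euclidean_space set \<Rightarrow> 'a \<Rightarrow> 'a set \<Rightarrow> 'a set" where
  "parabolic_dominant R h I = {l\<in>weight_lattice R.
      \<forall>\<alpha>\<in>parabolic_pos_roots R h I. l \<bullet> \<alpha> \<ge> 0}"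

end

theory Submission
  imports Defs
begin

text \<open>Write \<open>v = vmin R h l\<close>, \<open>\<mu> = v l\<close>, and \<open>v'\<close>, \<open>\<mu>'\<close> likewise for \<open>m\<close>. Then \<open>\<mu>\<close> is
  antidominant, \<open>\<rho>\<close> is dominant because \<open>k \<ge> 0\<close>, and the shifted weight of \<open>l\<close> is
  \<open>inv v (\<mu> - \<rho>)\<close>. If some \<open>u \<in> W\<^sub>I\<close> maps the shifted weight of \<open>l\<close> to that of \<open>m\<close>, then
  \<open>g = v' \<circ> u \<circ> inv v\<close> maps the dominant point \<open>\<rho> - \<mu>\<close> to the dominant point \<open>\<rho> - \<mu>'\<close>. The
  closed dominant chamber is a fundamental domain whose stabilisers are generated by simple
  reflections, so \<open>\<mu> = \<mu>'\<close> and \<open>g \<mu> = \<mu>\<close>, whence \<open>u l = m\<close>; the same fact for \<open>W\<^sub>I\<close> and its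
  dominant chamber gives \<open>l = m\<close>. Thus distinct weights in \<open>P\<^sub>I\<^sup>+\<close> have disjoint \<open>W\<^sub>I\<close>-orbits
  of shifted weights, and the \<open>W\<^sub>I\<close>-invariant polynomial \<open>x \<mapsto> \<Prod>u\<in>W\<^sub>I. \<parallel>u x - a\<parallel>\<^sup>2\<close>, with
  \<open>a\<close> the shifted weight of \<open>m\<close>, separates them.\<close>

section \<open>Reflections and reflection groups\<close>

lemma refl_linear: "linear (refl a)"
  unfolding refl_def
  by (rule linearI) (auto simp: inner_add_left algebra_simps add_divide_distrib
      scaleR_add_left[symmetric] simp del: scaleR_add_left)

lemma refl_0: "refl 0 = id"
  by (auto simp: refl_def fun_eq_iff)

lemma refl_inner: "refl a x \<bullet> refl a y = x \<bullet> y"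
  by (cases "a = 0")
    (simp_all add: refl_0 refl_def inner_diff_left inner_diff_right inner_commute field_simps)

lemma refl_refl [simp]: "refl a (refl a x) = x"
  by (cases "a = 0") (simp_all add: refl_0 refl_def inner_diff_left algebra_simps)

lemma refl_comp_refl [simp]: "refl a \<circ> refl a = id"
  and refl_comp_refl_comp [simp]: "refl a \<circ> (refl a \<circ> f) = f"
  by (auto simp: fun_eq_iff)

lemma refl_self [simp]: "refl a a = - a"
  by (cases "a = 0") (auto simp: refl_def scaleR_2)

lemma refl_orthogonal: "x \<bullet> a = 0 \<Longrightarrow> refl a x = x"
  by (simp add: refl_def)

lemma refl_scaleR: "c \<noteq> 0 \<Longrightarrow> refl (c *\<^sub>R a) = refl a"
  by (auto simp: refl_def fun_eq_iff field_simps)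

lemma refl_uminus: "refl (- a) = refl a"
  using refl_scaleR[of "-1" a] by simp

lemma bij_refl: "bij (refl a)"
  by (rule involuntory_imp_bij) simp

lemma inv_refl [simp]: "inv (refl a) = refl a"
  by (rule inv_unique_comp) simp_all

lemma orthogonal_map_comp_refl:
  assumes "linear w" "\<And>x y. w x \<bullet> w y = x \<bullet> y"
  shows "w \<circ> refl b = refl (w b) \<circ> w"
  using assms by (simp add: fun_eq_iff refl_def linear_diff linear_scale)

definition refl_prod :: "'a::euclidean_space list \<Rightarrow> 'a \<Rightarrow> 'a" where
  "refl_prod as = foldr (\<lambda>\<alpha> f. refl \<alpha> \<circ> f) as id"

lemma refl_prod_Nil [simp]: "refl_prod [] = id"
  and refl_prod_Cons [simp]: "refl_prod (a # as) = refl a \<circ> refl_prod as"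
  by (simp_all add: refl_prod_def)

lemma refl_prod_append [simp]: "refl_prod (as @ bs) = refl_prod as \<circ> refl_prod bs"
  by (induction as) auto

lemma refl_prod_snoc: "refl_prod (as @ [a]) = refl_prod as \<circ> refl a"
  by simp

lemma refl_group_comp:
  "w1 \<in> refl_group A \<Longrightarrow> w2 \<in> refl_group A \<Longrightarrow> w1 \<circ> w2 \<in> refl_group A"
  by (induction rule: refl_group.induct) (auto simp: o_assoc[symmetric] intro: refl_group.step)

lemma refl_group_ident [simp]: "(\<lambda>x. x) \<in> refl_group A"
  using refl_group.id unfolding id_def .

lemma refl_group_refl: "a \<in> A \<Longrightarrow> refl a \<in> refl_group A"
  using refl_group.step[OF refl_group.id, of a A] by simp

lemma refl_group_mono: "w \<in> refl_group A \<Longrightarrow> A \<subseteq> B \<Longrightarrow> w \<in> refl_group B"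
  by (induction rule: refl_group.induct) (auto intro: refl_group.intros)

lemma refl_group_iff_refl_prod: "w \<in> refl_group A \<longleftrightarrow> (\<exists>as. set as \<subseteq> A \<and> w = refl_prod as)"
proof
  show "w \<in> refl_group A \<Longrightarrow> \<exists>as. set as \<subseteq> A \<and> w = refl_prod as"
  proof (induction rule: refl_group.induct)
    case (step w a)
    then obtain as where "set as \<subseteq> A" "w = refl_prod as" by blast
    with step show ?case by (intro exI[of _ "a # as"]) auto
  qed (auto intro: exI[of _ "[]"])
  show "\<exists>as. set as \<subseteq> A \<and> w = refl_prod as \<Longrightarrow> w \<in> refl_group A"
  proof (elim exE conjE)
    fix as assume "set as \<subseteq> A" "w = refl_prod as"
    then show "w \<in> refl_group A"
      by (induction as arbitrary: w) (auto intro: refl_group.intros)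
  qed
qed

lemma refl_prod_in_refl_group: "set as \<subseteq> A \<Longrightarrow> refl_prod as \<in> refl_group A"
  using refl_group_iff_refl_prod by blast

lemma refl_group_linear: "w \<in> refl_group A \<Longrightarrow> linear w"
proof (induction rule: refl_group.induct)
  case (step w a)
  then show ?case using linear_compose[OF step.IH refl_linear] by (simp add: comp_def)
qed (simp add: id_def linear_ident)

lemma refl_group_inner: "w \<in> refl_group A \<Longrightarrow> w x \<bullet> w y = x \<bullet> y"
  by (induction rule: refl_group.induct) (auto simp: refl_inner)

lemma refl_group_bij_inv: "w \<in> refl_group A \<Longrightarrow> bij w \<and> inv w \<in> refl_group A"
proof (induction rule: refl_group.induct)
  case (step w a)
  then have "inv (refl a \<circ> w) = inv w \<circ> refl a"
    by (simp add: o_inv_distrib bij_refl)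
  with step show ?case
    using bij_comp[OF _ bij_refl] refl_group_comp[OF _ refl_group_refl] by metis
qed (simp add: bij_id[unfolded id_def])

lemma refl_group_bij: "w \<in> refl_group A \<Longrightarrow> bij w"
  and inv_in_refl_group: "w \<in> refl_group A \<Longrightarrow> inv w \<in> refl_group A"
  using refl_group_bij_inv by blast+

lemma refl_group_inv_apply [simp]: "w \<in> refl_group A \<Longrightarrow> inv w (w x) = x"
  and refl_group_apply_inv [simp]: "w \<in> refl_group A \<Longrightarrow> w (inv w x) = x"
  by (simp_all add: refl_group_bij bij_is_inj bij_is_surj surj_f_inv_f)

lemma refl_group_inv_comp_refl:
  "w \<in> refl_group A \<Longrightarrow> inv (refl a \<circ> w) = inv w \<circ> refl a"
  by (simp add: o_inv_distrib bij_refl refl_group_bij)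

lemma refl_group_preserves:
  assumes "w \<in> refl_group A" "\<And>a x. a \<in> A \<Longrightarrow> x \<in> X \<Longrightarrow> refl a x \<in> X" "x \<in> X"
  shows "w x \<in> X"
  using assms by (induction arbitrary: x rule: refl_group.induct) auto

lemma refl_group_fixes:
  assumes "w \<in> refl_group A" "\<And>a. a \<in> A \<Longrightarrow> refl a x = x"
  shows "w x = x"
  using assms by (induction rule: refl_group.induct) auto

lemma refl_group_span: "w \<in> refl_group A \<Longrightarrow> x \<in> span A \<Longrightarrow> w x \<in> span A"
  by (erule refl_group_preserves) (auto simp: refl_def intro: span_diff span_scale span_base)

lemma refl_group_comp_right_bij:
  assumes "w \<in> refl_group A"
  shows "bij_betw (\<lambda>u. u \<circ> w) (refl_group A) (refl_group A)"
proof (rule bij_betw_byWitness[where f'="\<lambda>u. u \<circ> inv w"])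
  show "\<forall>u\<in>refl_group A. u \<circ> w \<circ> inv w = u" "\<forall>u\<in>refl_group A. u \<circ> inv w \<circ> w = u"
    using assms by (auto simp: fun_eq_iff)
qed (auto intro: refl_group_comp assms inv_in_refl_group)

section \<open>Invariant polynomials vanishing on an orbit\<close>

lemma poly_fun_sum:
  "finite A \<Longrightarrow> (\<And>i. i \<in> A \<Longrightarrow> f i \<in> poly_fun) \<Longrightarrow> (\<lambda>x. \<Sum>i\<in>A. f i x) \<in> poly_fun"
  by (induction A rule: finite_induct) (auto intro: poly_fun.intros)

lemma poly_fun_prod:
  "finite A \<Longrightarrow> (\<And>i. i \<in> A \<Longrightarrow> f i \<in> poly_fun) \<Longrightarrow> (\<lambda>x. \<Prod>i\<in>A. f i x) \<in> poly_fun"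
  by (induction A rule: finite_induct) (auto intro: poly_fun.intros)

lemma poly_fun_norm_sq_linear:
  fixes u :: "'a::euclidean_space \<Rightarrow> 'a"
  assumes "linear u"
  shows "(\<lambda>x. complex_of_real ((u x - a) \<bullet> (u x - a))) \<in> poly_fun"
proof -
  define c where "c b x = complex_of_real (x \<bullet> adjoint u b) + complex_of_real (- (a \<bullet> b))" for b x
  have "(u x - a) \<bullet> (u x - a) = (\<Sum>b\<in>Basis. ((u x - a) \<bullet> b) * ((u x - a) \<bullet> b))" for x
    by (rule euclidean_inner)
  then have "(\<lambda>x. complex_of_real ((u x - a) \<bullet> (u x - a))) = (\<lambda>x. \<Sum>b\<in>Basis. c b x * c b x)"
    by (simp add: c_def adjoint_works[OF assms] inner_diff_left fun_eq_iff)
  moreover have "(\<lambda>x. \<Sum>b\<in>Basis. c b x * c b x) \<in> poly_fun"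
    unfolding c_def by (intro poly_fun_sum poly_fun.intros) simp
  ultimately show ?thesis by simp
qed

definition orbit_poly :: "'a::euclidean_space set \<Rightarrow> 'a \<Rightarrow> 'a \<Rightarrow> complex" where
  "orbit_poly A a x = (\<Prod>u\<in>refl_group A. complex_of_real ((u x - a) \<bullet> (u x - a)))"

lemma orbit_poly_in_poly_fun: "finite (refl_group A) \<Longrightarrow> orbit_poly A a \<in> poly_fun"
  unfolding orbit_poly_def[abs_def]
  by (intro poly_fun_prod poly_fun_norm_sq_linear refl_group_linear)

lemma orbit_poly_invariant: "w \<in> refl_group A \<Longrightarrow> orbit_poly A a (w x) = orbit_poly A a x"
  unfolding orbit_poly_def
  using prod.reindex_bij_betw[OF refl_group_comp_right_bij,
      of w A "\<lambda>u. complex_of_real ((u x - a) \<bullet> (u x - a))"]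
  by simp

lemma orbit_poly_eq_0_iff:
  "finite (refl_group A) \<Longrightarrow> orbit_poly A a x = 0 \<longleftrightarrow> (\<exists>u\<in>refl_group A. u x = a)"
  by (simp add: orbit_poly_def)

section \<open>Root systems with a positive system\<close>

lemma pos_int_mult_eq_4: "(m::int) > 0 \<Longrightarrow> n > 0 \<Longrightarrow> m * n = 4 \<Longrightarrow> m \<in> {1, 2, 4}"
proof -
  assume mn: "m > 0" "n > 0" "m * n = 4"
  then have "m \<le> 4" by (smt (verit) mult_le_cancel_left1)
  moreover have "m \<noteq> 3"
  proof
    assume "m = 3"
    with mn(3) have "3 * n = 4" by simp
    then show False by presburger
  qed
  ultimately show ?thesis using mn(1) by auto
qed

lemma pos_int_mult_less_4: "(m::int) > 0 \<Longrightarrow> n > 0 \<Longrightarrow> m * n < 4 \<Longrightarrow> m = 1 \<or> n = 1"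
proof (rule ccontr)
  assume mn: "m > 0" "n > 0" "m * n < 4" "\<not> (m = 1 \<or> n = 1)"
  then have "2 * 2 \<le> m * n" by (intro mult_mono) auto
  with mn show False by simp
qed

lemma inner_square_less_if_not_proportional:
  fixes \<alpha> \<beta> :: "'a::real_inner"
  assumes "\<alpha> \<noteq> 0" "\<And>c. \<beta> \<noteq> c *\<^sub>R \<alpha>"
  shows "(\<alpha> \<bullet> \<beta>)\<^sup>2 < (\<alpha> \<bullet> \<alpha>) * (\<beta> \<bullet> \<beta>)"
proof -
  have "\<bar>\<alpha> \<bullet> \<beta>\<bar> \<noteq> norm \<alpha> * norm \<beta>"
  proof
    assume "\<bar>\<alpha> \<bullet> \<beta>\<bar> = norm \<alpha> * norm \<beta>"
    then obtain t where t: "norm \<alpha> *\<^sub>R \<beta> = t *\<^sub>R \<alpha>"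
      unfolding norm_cauchy_schwarz_abs_eq by (metis scaleR_minus_left)
    have "\<beta> = (1 / norm \<alpha>) *\<^sub>R (norm \<alpha> *\<^sub>R \<beta>)"
      using assms(1) by simp
    also have "\<dots> = (t / norm \<alpha>) *\<^sub>R \<alpha>"
      by (simp add: t)
    finally have "\<beta> = (t / norm \<alpha>) *\<^sub>R \<alpha>" .
    with assms(2) show False by blast
  qed
  then have "\<bar>\<alpha> \<bullet> \<beta>\<bar> < norm \<alpha> * norm \<beta>"
    using Cauchy_Schwarz_ineq2[of \<alpha> \<beta>] by linarith
  then have "\<bar>\<alpha> \<bullet> \<beta>\<bar>\<^sup>2 < (norm \<alpha> * norm \<beta>)\<^sup>2"
    by (intro power_strict_mono) auto
  then show ?thesis
    by (simp add: power_mult_distrib power2_norm_eq_inner)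
qed

lemma nat_transition_point: "\<not> P (0::nat) \<Longrightarrow> P n \<Longrightarrow> \<exists>i<n. \<not> P i \<and> P (Suc i)"
proof (induction n)
  case (Suc n)
  show ?case
  proof (cases "P n")
    case True
    with Suc obtain i where "i < n" "\<not> P i" "P (Suc i)" by blast
    then show ?thesis using less_SucI by blast
  qed (use Suc.prems in blast)
qed simp

lemma sum_eq_0_if_involution_negates:
  fixes f :: "'a \<Rightarrow> real"
  assumes "finite A" "\<And>x. x \<in> A \<Longrightarrow> \<sigma> x \<in> A" "\<And>x. x \<in> A \<Longrightarrow> \<sigma> (\<sigma> x) = x"
    and neg: "\<And>x. x \<in> A \<Longrightarrow> f (\<sigma> x) = - f x"
  shows "sum f A = 0"
proof -
  have "bij_betw \<sigma> A A" using assms(2,3) by (intro bij_betw_byWitness[where f'=\<sigma>]) auto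
  then have "sum f A = sum (\<lambda>x. f (\<sigma> x)) A" by (rule sum.reindex_bij_betw[symmetric])
  also have "\<dots> = - sum f A" using neg by (simp add: sum_negf)
  finally show ?thesis by simp
qed

locale based_root_system =
  fixes R :: "'a::euclidean_space set" and h :: 'a
  assumes root_system: "root_system R" and regular: "\<forall>\<alpha>\<in>R. \<alpha> \<bullet> h \<noteq> 0"
begin

abbreviation "Rpos \<equiv> pos_roots R h"
abbreviation "Rneg \<equiv> {\<alpha>\<in>R. \<alpha> \<bullet> h < 0}"
abbreviation "S \<equiv> simple_roots R h"
abbreviation "W \<equiv> refl_group R"

lemma finite_roots: "finite R" and zero_not_root: "0 \<notin> R" and span_roots: "span R = UNIV"
  and refl_root: "\<alpha> \<in> R \<Longrightarrow> \<beta> \<in> R \<Longrightarrow> refl \<alpha> \<beta> \<in> R"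
  and cartan_integer: "\<alpha> \<in> R \<Longrightarrow> \<beta> \<in> R \<Longrightarrow> 2 * (\<beta> \<bullet> \<alpha>) / (\<alpha> \<bullet> \<alpha>) \<in> \<int>"
  using root_system by (auto simp: root_system_def)

lemma root_nonzero: "\<alpha> \<in> R \<Longrightarrow> \<alpha> \<noteq> 0"
  using zero_not_root by auto

lemma uminus_root: "\<alpha> \<in> R \<Longrightarrow> - \<alpha> \<in> R"
  using refl_root[of \<alpha> \<alpha>] by simp

lemma mem_Rpos: "\<alpha> \<in> Rpos \<longleftrightarrow> \<alpha> \<in> R \<and> \<alpha> \<bullet> h > 0"
  by (simp add: pos_roots_def)

lemma root_cases: "\<alpha> \<in> R \<Longrightarrow> \<alpha> \<in> Rpos \<or> \<alpha> \<in> Rneg"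
  using regular by (auto simp: mem_Rpos less_linear)

lemma mem_Rneg_iff: "\<alpha> \<in> Rneg \<longleftrightarrow> - \<alpha> \<in> Rpos"
  using uminus_root by (force simp: mem_Rpos)

lemma Rpos_not_Rneg: "\<alpha> \<in> Rpos \<Longrightarrow> \<alpha> \<notin> Rneg"
  by (auto simp: mem_Rpos)

lemma finite_Rpos: "finite Rpos"
  using finite_roots by (auto simp: pos_roots_def)

lemma refl_group_root: "w \<in> refl_group A \<Longrightarrow> A \<subseteq> R \<Longrightarrow> \<beta> \<in> R \<Longrightarrow> w \<beta> \<in> R"
  by (erule refl_group_preserves) (auto intro: refl_root)

lemma finite_W: "finite W"
proof -
  let ?f = "\<lambda>w. restrict w R"
  have "?f ` W \<subseteq> (\<Pi>\<^sub>E \<beta>\<in>R. R)"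
    using refl_group_root by auto
  moreover have "finite (\<Pi>\<^sub>E \<beta>\<in>R. R)"
    using finite_roots by (intro finite_PiE) auto
  ultimately have "finite (?f ` W)"
    by (rule finite_subset)
  moreover have "inj_on ?f W"
  proof (rule inj_onI)
    fix w1 w2 assume w: "w1 \<in> W" "w2 \<in> W" "?f w1 = ?f w2"
    then have "w1 \<beta> = w2 \<beta>" if "\<beta> \<in> R" for \<beta>
      using that by (metis restrict_apply')
    moreover have "x \<in> span R" for x
      using span_roots by simp
    ultimately show "w1 = w2"
      using linear_eq_on_span[OF refl_group_linear[OF w(1)] refl_group_linear[OF w(2)]] by blast
  qed
  ultimately show ?thesis
    using finite_image_iff by blast
qed

lemma cartan_integerE:
  assumes "\<alpha> \<in> R" "\<beta> \<in> R"
  obtains m :: int where "2 * (\<beta> \<bullet> \<alpha>) / (\<alpha> \<bullet> \<alpha>) = m" "refl \<alpha> \<beta> = \<beta> - m *\<^sub>R \<alpha>"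
proof -
  from cartan_integer[OF assms] obtain m where m: "2 * (\<beta> \<bullet> \<alpha>) / (\<alpha> \<bullet> \<alpha>) = of_int m"
    by (auto elim: Ints_cases)
  moreover from m have "refl \<alpha> \<beta> = \<beta> - of_int m *\<^sub>R \<alpha>"
    by (simp add: refl_def)
  ultimately show thesis by (rule that)
qed

lemma proportional_root_coeff:
  assumes "\<alpha> \<in> R" "c *\<^sub>R \<alpha> \<in> R" "c > 0"
  shows "c = 1/2 \<or> c = 1 \<or> c = 2"
proof -
  have \<alpha>: "\<alpha> \<bullet> \<alpha> \<noteq> 0" using root_nonzero[OF assms(1)] by simp
  have "2 * ((c *\<^sub>R \<alpha>) \<bullet> \<alpha>) / (\<alpha> \<bullet> \<alpha>) \<in> \<int>" using cartan_integer assms by blast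
  then have "2 * c \<in> \<int>" using \<alpha> by simp
  then obtain m where m: "2 * c = of_int m" by (auto elim: Ints_cases)
  have "2 * (\<alpha> \<bullet> (c *\<^sub>R \<alpha>)) / ((c *\<^sub>R \<alpha>) \<bullet> (c *\<^sub>R \<alpha>)) \<in> \<int>" using cartan_integer assms by blast
  then have "2 / c \<in> \<int>" using \<alpha> assms(3) by (simp add: power2_eq_square)
  then obtain n where n: "2 / c = of_int n" by (auto elim: Ints_cases)
  have "real_of_int (m * n) = (2 * c) * (2 / c)" by (simp add: m n)
  also have "\<dots> = 4" using assms(3) by simp
  finally have "m * n = 4" by linarith
  moreover have "real_of_int m > 0" "real_of_int n > 0"
    using assms(3) by (simp_all flip: m n)
  then have "m > 0" "n > 0" by simp_all
  ultimately have "m \<in> {1, 2, 4}" using pos_int_mult_eq_4 by blast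
  with m show ?thesis by auto
qed

lemma acute_roots_diff:
  assumes "\<alpha> \<in> R" "\<beta> \<in> R" "\<alpha> \<bullet> \<beta> > 0" "\<And>c. \<beta> \<noteq> c *\<^sub>R \<alpha>"
  shows "\<alpha> - \<beta> \<in> R"
proof -
  have pos: "\<alpha> \<bullet> \<alpha> > 0" "\<beta> \<bullet> \<beta> > 0" using root_nonzero assms(1,2) by auto
  obtain m :: int where m: "2 * (\<beta> \<bullet> \<alpha>) / (\<alpha> \<bullet> \<alpha>) = m" "refl \<alpha> \<beta> = \<beta> - m *\<^sub>R \<alpha>"
    using cartan_integerE[OF assms(1,2)] .
  obtain n :: int where n: "2 * (\<alpha> \<bullet> \<beta>) / (\<beta> \<bullet> \<beta>) = n" "refl \<beta> \<alpha> = \<alpha> - n *\<^sub>R \<beta>"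
    using cartan_integerE[OF assms(2,1)] .
  have "real_of_int (m * n) = (2 * (\<beta> \<bullet> \<alpha>) / (\<alpha> \<bullet> \<alpha>)) * (2 * (\<alpha> \<bullet> \<beta>) / (\<beta> \<bullet> \<beta>))"
    by (simp add: m(1) n(1))
  also have "\<dots> = 4 * (\<alpha> \<bullet> \<beta>)\<^sup>2 / ((\<alpha> \<bullet> \<alpha>) * (\<beta> \<bullet> \<beta>))"
    by (simp add: inner_commute power2_eq_square)
  also have "\<dots> < 4"
    using inner_square_less_if_not_proportional[OF root_nonzero[OF assms(1)] assms(4)] pos
    by (simp add: divide_less_eq)
  finally have "real_of_int (m * n) < 4" .
  moreover have "real_of_int m > 0" "real_of_int n > 0"
    unfolding m(1)[symmetric] n(1)[symmetric] using pos assms(3) by (simp_all add: inner_commute)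
  ultimately have "m > 0" "n > 0" "m * n < 4"
    by (simp_all only: of_int_0_less_iff of_int_less_numeral_iff)
  then have "m = 1 \<or> n = 1"
    by (rule pos_int_mult_less_4)
  then show ?thesis
  proof
    assume "m = 1"
    then have "- refl \<alpha> \<beta> = \<alpha> - \<beta>" using m(2) by simp
    then show ?thesis using uminus_root[OF refl_root[OF assms(1,2)]] by simp
  next
    assume "n = 1"
    then show ?thesis using n(2) refl_root[OF assms(2,1)] by simp
  qed
qed

lemma simple_roots_Rpos: "S \<subseteq> Rpos"
  by (auto simp: simple_roots_def)

lemma simple_roots_roots: "S \<subseteq> R"
  using simple_roots_Rpos by (auto simp: mem_Rpos)

lemma simple_root_pos: "\<alpha> \<in> S \<Longrightarrow> \<alpha> \<bullet> h > 0"
  using simple_roots_Rpos by (auto simp: mem_Rpos)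

lemma simple_root_not_sum: "\<alpha> \<in> S \<Longrightarrow> \<beta> \<in> Rpos \<Longrightarrow> \<gamma> \<in> Rpos \<Longrightarrow> \<alpha> \<noteq> \<beta> + \<gamma>"
  by (auto simp: simple_roots_def)

lemma finite_simple_roots: "finite S"
  using finite_roots simple_roots_roots by (rule finite_subset[rotated])

lemma simple_root_indivisible: "\<alpha> \<in> S \<Longrightarrow> (1/2) *\<^sub>R \<alpha> \<notin> R"
proof
  assume \<alpha>: "\<alpha> \<in> S" "(1/2) *\<^sub>R \<alpha> \<in> R"
  then have "(1/2) *\<^sub>R \<alpha> \<in> Rpos" using simple_root_pos[OF \<alpha>(1)] by (simp add: mem_Rpos)
  moreover have "\<alpha> = (1/2) *\<^sub>R \<alpha> + (1/2) *\<^sub>R \<alpha>" by (simp flip: scaleR_add_left)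
  ultimately show False using simple_root_not_sum[OF \<alpha>(1)] by blast
qed

lemma proportional_to_simple_root:
  assumes "\<alpha> \<in> S" "c *\<^sub>R \<alpha> \<in> R" "c > 0"
  shows "c = 1 \<or> c = 2"
proof -
  have "c = 1/2 \<or> c = 1 \<or> c = 2"
    using proportional_root_coeff[OF _ assms(2,3)] simple_roots_roots assms(1) by blast
  moreover have "c \<noteq> 1/2"
  proof
    assume "c = 1/2"
    with assms(2) simple_root_indivisible[OF assms(1)] show False by simp
  qed
  ultimately show ?thesis by blast
qed

lemma pos_root_induct [consumes 1, case_names simple sum]:
  assumes "\<beta> \<in> Rpos" "\<And>\<beta>. \<beta> \<in> S \<Longrightarrow> P \<beta>"
    "\<And>\<beta>1 \<beta>2. \<beta>1 \<in> Rpos \<Longrightarrow> \<beta>2 \<in> Rpos \<Longrightarrow> P \<beta>1 \<Longrightarrow> P \<beta>2 \<Longrightarrow> P (\<beta>1 + \<beta>2)"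
  shows "P \<beta>"
  using assms(1)
proof (induction "card {\<gamma>\<in>Rpos. \<gamma> \<bullet> h < \<beta> \<bullet> h}" arbitrary: \<beta> rule: less_induct)
  case (less \<beta>)
  show ?case
  proof (cases "\<beta> \<in> S")
    case False
    then obtain \<beta>1 \<beta>2 where \<beta>: "\<beta>1 \<in> Rpos" "\<beta>2 \<in> Rpos" "\<beta> = \<beta>1 + \<beta>2"
      using less.prems by (auto simp: simple_roots_def)
    then have "\<beta>1 \<bullet> h < \<beta> \<bullet> h" "\<beta>2 \<bullet> h < \<beta> \<bullet> h"
      by (auto simp: mem_Rpos inner_add_left)
    then have "card {\<gamma>\<in>Rpos. \<gamma> \<bullet> h < \<beta>i \<bullet> h} < card {\<gamma>\<in>Rpos. \<gamma> \<bullet> h < \<beta> \<bullet> h}"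
      if "\<beta>i \<in> {\<beta>1, \<beta>2}" for \<beta>i
      using that \<beta> by (intro psubset_card_mono) (use finite_Rpos in auto)
    with less \<beta> show ?thesis using assms(3) by blast
  qed (use assms(2) in blast)
qed

lemma pos_root_nonneg_comb:
  assumes "\<beta> \<in> Rpos"
  obtains c where "\<forall>\<delta>. c \<delta> \<ge> 0" "\<beta> = (\<Sum>\<delta>\<in>S. c \<delta> *\<^sub>R \<delta>)"
proof -
  have "\<exists>c. (\<forall>\<delta>. c \<delta> \<ge> 0) \<and> \<beta> = (\<Sum>\<delta>\<in>S. c \<delta> *\<^sub>R \<delta>)"
    using assms
  proof (induction rule: pos_root_induct)
    case (simple \<beta>)
    have "(\<Sum>\<delta>\<in>S. (if \<delta> = \<beta> then 1 else 0) *\<^sub>R \<delta>) = (\<Sum>\<delta>\<in>S. if \<delta> = \<beta> then \<beta> else 0)"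
      by (rule sum.cong) auto
    also have "\<dots> = \<beta>"
      using simple finite_simple_roots by simp
    finally have "(\<Sum>\<delta>\<in>S. (if \<delta> = \<beta> then 1 else 0) *\<^sub>R \<delta>) = \<beta>" .
    then show ?case by (intro exI[of _ "\<lambda>\<delta>. if \<delta> = \<beta> then 1 else 0"]) auto
  next
    case (sum \<beta>1 \<beta>2)
    then obtain c1 c2 where "\<forall>\<delta>. c1 \<delta> \<ge> 0" "\<beta>1 = (\<Sum>\<delta>\<in>S. c1 \<delta> *\<^sub>R \<delta>)"
      "\<forall>\<delta>. c2 \<delta> \<ge> 0" "\<beta>2 = (\<Sum>\<delta>\<in>S. c2 \<delta> *\<^sub>R \<delta>)" by blast
    then show ?case
      by (intro exI[of _ "\<lambda>\<delta>. c1 \<delta> + c2 \<delta>"]) (simp add: scaleR_add_left sum.distrib add_nonneg_nonneg)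
  qed
  with that show ?thesis by blast
qed

lemma pos_root_acute_imp_simple_acute:
  "\<beta> \<in> Rpos \<Longrightarrow> x \<bullet> \<beta> > 0 \<Longrightarrow> \<exists>\<delta>\<in>S. x \<bullet> \<delta> > 0"
proof (induction rule: pos_root_induct)
  case (sum \<beta>1 \<beta>2)
  then show ?case by (auto simp: inner_add_right) (metis add_nonpos_nonpos not_le)
qed blast

lemma simple_roots_obtuse:
  assumes "\<alpha> \<in> S" "\<delta> \<in> S" "\<alpha> \<noteq> \<delta>"
  shows "\<alpha> \<bullet> \<delta> \<le> 0"
proof (rule ccontr)
  assume "\<not> \<alpha> \<bullet> \<delta> \<le> 0"
  then have acute: "\<alpha> \<bullet> \<delta> > 0" by simp
  have roots: "\<alpha> \<in> R" "\<delta> \<in> R" and pos: "\<alpha> \<in> Rpos" "\<delta> \<in> Rpos"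
    using assms simple_roots_roots simple_roots_Rpos by auto
  show False
  proof (cases "\<exists>c. \<delta> = c *\<^sub>R \<alpha>")
    case True
    then obtain c where c: "\<delta> = c *\<^sub>R \<alpha>" by blast
    have "c > 0" using simple_root_pos[OF assms(1)] simple_root_pos[OF assms(2)] c
      by (simp add: zero_less_mult_iff)
    then have "c = 1 \<or> c = 2" using proportional_to_simple_root[OF assms(1)] roots c by blast
    moreover have "c \<noteq> 1" using c assms(3) by auto
    ultimately have "c = 2" by blast
    then have "(1/2) *\<^sub>R \<delta> = \<alpha>" using c by simp
    then show False using simple_root_indivisible[OF assms(2)] roots by simp
  next
    case False
    then have "\<alpha> - \<delta> \<in> R" using acute_roots_diff[OF roots acute] by blast
    then consider "\<alpha> - \<delta> \<in> Rpos" | "\<delta> - \<alpha> \<in> Rpos"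
      using root_cases mem_Rneg_iff by fastforce
    then show False
    proof cases
      case 1
      then show False using simple_root_not_sum[OF assms(1) 1 pos(2)] by simp
    next
      case 2
      then show False using simple_root_not_sum[OF assms(2) 2 pos(1)] by simp
    qed
  qed
qed

text \<open>The part \<open>p\<close> of the combination off \<open>\<alpha>\<close> is a multiple of \<open>\<alpha>\<close>; it is obtuse to \<open>\<alpha>\<close>
  and has nonnegative height, which forces \<open>p = 0\<close>.\<close>
lemma nonneg_simple_comb_multiple_of_simple:
  assumes \<alpha>: "\<alpha> \<in> S" and c: "\<forall>\<delta>. c \<delta> \<ge> 0" and sum: "(\<Sum>\<delta>\<in>S. c \<delta> *\<^sub>R \<delta>) = t *\<^sub>R \<alpha>"
  shows "\<forall>\<delta>\<in>S - {\<alpha>}. c \<delta> = 0"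
proof -
  define p where "p = (\<Sum>\<delta>\<in>S - {\<alpha>}. c \<delta> *\<^sub>R \<delta>)"
  have p: "p = (t - c \<alpha>) *\<^sub>R \<alpha>"
    using sum by (simp add: p_def sum.remove[OF finite_simple_roots \<alpha>] algebra_simps)
  have terms_nonneg: "\<And>\<delta>. \<delta> \<in> S - {\<alpha>} \<Longrightarrow> c \<delta> * (\<delta> \<bullet> h) \<ge> 0"
    using c simple_root_pos by (simp add: less_imp_le)
  have ph: "p \<bullet> h = (\<Sum>\<delta>\<in>S - {\<alpha>}. c \<delta> * (\<delta> \<bullet> h))"
    by (simp add: p_def inner_sum_left)
  have "p \<bullet> \<alpha> = (\<Sum>\<delta>\<in>S - {\<alpha>}. c \<delta> * (\<delta> \<bullet> \<alpha>))"
    by (simp add: p_def inner_sum_left)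
  also have "\<dots> \<le> 0"
    using c simple_roots_obtuse[OF _ \<alpha>] by (intro sum_nonpos) (simp add: mult_nonneg_nonpos)
  finally have p\<alpha>: "p \<bullet> \<alpha> \<le> 0" .
  have "p = 0"
  proof (cases "t - c \<alpha> \<ge> 0")
    case True
    have "p \<bullet> p = p \<bullet> ((t - c \<alpha>) *\<^sub>R \<alpha>)"
      by (simp only: p[symmetric])
    also have "\<dots> = (t - c \<alpha>) * (p \<bullet> \<alpha>)"
      by simp
    finally have "p \<bullet> p \<le> 0" using True p\<alpha> by (simp add: mult_nonneg_nonpos)
    then show ?thesis by (metis inner_eq_zero_iff inner_ge_zero order_antisym)
  next
    case False
    then have "p \<bullet> h < 0" using simple_root_pos[OF \<alpha>] by (simp add: p mult_neg_pos)
    moreover have "p \<bullet> h \<ge> 0" unfolding ph using terms_nonneg by (rule sum_nonneg)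
    ultimately show ?thesis by simp
  qed
  then have "(\<Sum>\<delta>\<in>S - {\<alpha>}. c \<delta> * (\<delta> \<bullet> h)) = 0"
    using ph by simp
  moreover have "(\<Sum>\<delta>\<in>S - {\<alpha>}. c \<delta> * (\<delta> \<bullet> h)) = 0 \<longleftrightarrow> (\<forall>\<delta>\<in>S - {\<alpha>}. c \<delta> * (\<delta> \<bullet> h) = 0)"
    using finite_simple_roots terms_nonneg by (intro sum_nonneg_eq_0_iff) auto
  ultimately have "\<forall>\<delta>\<in>S - {\<alpha>}. c \<delta> * (\<delta> \<bullet> h) = 0"
    by blast
  with simple_root_pos show ?thesis
    by (simp add: less_le)
qed

lemma simple_refl_neg_imp_proportional:
  assumes \<alpha>: "\<alpha> \<in> S" and \<beta>: "\<beta> \<in> Rpos" and neg: "refl \<alpha> \<beta> \<in> Rneg"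
  shows "\<exists>c>0. \<beta> = c *\<^sub>R \<alpha>"
proof -
  define t where "t = 2 * (\<beta> \<bullet> \<alpha>) / (\<alpha> \<bullet> \<alpha>)"
  have "- refl \<alpha> \<beta> = t *\<^sub>R \<alpha> - \<beta>" by (simp add: refl_def t_def)
  then have "t *\<^sub>R \<alpha> - \<beta> \<in> Rpos" using neg mem_Rneg_iff by metis
  then obtain c' where c': "\<forall>\<delta>. c' \<delta> \<ge> 0" "t *\<^sub>R \<alpha> - \<beta> = (\<Sum>\<delta>\<in>S. c' \<delta> *\<^sub>R \<delta>)"
    by (rule pos_root_nonneg_comb)
  obtain c where c: "\<forall>\<delta>. c \<delta> \<ge> 0" "\<beta> = (\<Sum>\<delta>\<in>S. c \<delta> *\<^sub>R \<delta>)"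
    using pos_root_nonneg_comb[OF \<beta>] .
  have "(\<Sum>\<delta>\<in>S. (c \<delta> + c' \<delta>) *\<^sub>R \<delta>) = t *\<^sub>R \<alpha>"
    by (simp add: scaleR_add_left sum.distrib c'(2)[symmetric] c(2)[symmetric])
  then have "\<forall>\<delta>\<in>S - {\<alpha>}. c \<delta> + c' \<delta> = 0"
    using c(1) c'(1) by (intro nonneg_simple_comb_multiple_of_simple[OF \<alpha>]) (simp add: add_nonneg_nonneg)
  then have "\<forall>\<delta>\<in>S - {\<alpha>}. c \<delta> = 0"
    using c(1) c'(1) by (simp add: add_nonneg_eq_0_iff)
  then have \<beta>_eq: "\<beta> = c \<alpha> *\<^sub>R \<alpha>"
    unfolding c(2) by (simp add: sum.remove[OF finite_simple_roots \<alpha>])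
  moreover have "\<beta> \<noteq> 0" using \<beta> root_nonzero by (auto simp: mem_Rpos)
  ultimately have "c \<alpha> \<noteq> 0" by auto
  then have "c \<alpha> > 0" using c(1) by (simp add: order_less_le)
  with \<beta>_eq show ?thesis by blast
qed

lemma W_root: "w \<in> W \<Longrightarrow> \<beta> \<in> R \<Longrightarrow> w \<beta> \<in> R"
  using refl_group_root by blast

lemma simple_refl_group_in_W: "w \<in> refl_group D \<Longrightarrow> D \<subseteq> S \<Longrightarrow> w \<in> W"
  using refl_group_mono simple_roots_roots by blast

section \<open>Inversions and reduced words\<close>

text \<open>Only indivisible positive roots are counted, so that a simple reflection changes the number
  of inversions by exactly one also in a non-reduced root system.\<close>
definition inversions :: "('a \<Rightarrow> 'a) \<Rightarrow> 'a set" where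
  "inversions w = {\<beta>\<in>Rpos. (1/2) *\<^sub>R \<beta> \<notin> R \<and> w \<beta> \<in> Rneg}"

definition n_inversions :: "('a \<Rightarrow> 'a) \<Rightarrow> nat" where
  "n_inversions w = card (inversions w)"

lemma finite_inversions: "finite (inversions w)"
  using finite_Rpos by (auto simp: inversions_def)

lemma n_inversions_id [simp]: "n_inversions id = 0"
proof -
  have "inversions id = {}" by (auto simp: inversions_def mem_Rpos)
  then show ?thesis by (simp add: n_inversions_def)
qed

lemma simple_refl_indivisible_pos_root:
  assumes \<alpha>: "\<alpha> \<in> S" and \<beta>: "\<beta> \<in> Rpos" "(1/2) *\<^sub>R \<beta> \<notin> R" "\<beta> \<noteq> \<alpha>"
  shows "refl \<alpha> \<beta> \<in> Rpos" "(1/2) *\<^sub>R refl \<alpha> \<beta> \<notin> R" "refl \<alpha> \<beta> \<noteq> \<alpha>"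
proof -
  have roots: "\<alpha> \<in> R" "\<beta> \<in> R" using \<alpha> \<beta> simple_roots_roots by (auto simp: mem_Rpos)
  show "refl \<alpha> \<beta> \<in> Rpos"
  proof (rule ccontr)
    assume "refl \<alpha> \<beta> \<notin> Rpos"
    then have "refl \<alpha> \<beta> \<in> Rneg" using root_cases[OF refl_root[OF roots]] by blast
    then obtain c where c: "c > 0" "\<beta> = c *\<^sub>R \<alpha>"
      using simple_refl_neg_imp_proportional[OF \<alpha> \<beta>(1)] by blast
    then have "c = 1 \<or> c = 2" using proportional_to_simple_root[OF \<alpha>] roots by blast
    then show False
    proof
      assume "c = 1" then show False using c \<beta>(3) by simp
    next
      assume "c = 2" then show False using c \<beta>(2) roots by simp
    qed
  qed
  show "(1/2) *\<^sub>R refl \<alpha> \<beta> \<notin> R"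
  proof
    assume "(1/2) *\<^sub>R refl \<alpha> \<beta> \<in> R"
    then have "refl \<alpha> ((1/2) *\<^sub>R refl \<alpha> \<beta>) \<in> R" using refl_root roots by blast
    then show False using \<beta>(2) by (simp add: linear_scale[OF refl_linear])
  qed
  show "refl \<alpha> \<beta> \<noteq> \<alpha>"
  proof
    assume "refl \<alpha> \<beta> = \<alpha>"
    then have "refl \<alpha> (refl \<alpha> \<beta>) = refl \<alpha> \<alpha>" by simp
    then have "\<beta> = - \<alpha>" by simp
    then show False using \<beta>(1) simple_root_pos[OF \<alpha>] by (simp add: mem_Rpos)
  qed
qed

lemma inversions_comp_simple_refl:
  assumes \<alpha>: "\<alpha> \<in> S"
  shows "inversions (w \<circ> refl \<alpha>) - {\<alpha>} = refl \<alpha> ` (inversions w - {\<alpha>})"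
proof
  show "inversions (w \<circ> refl \<alpha>) - {\<alpha>} \<subseteq> refl \<alpha> ` (inversions w - {\<alpha>})"
  proof
    fix \<beta> assume "\<beta> \<in> inversions (w \<circ> refl \<alpha>) - {\<alpha>}"
    then have \<beta>: "\<beta> \<in> Rpos" "(1/2) *\<^sub>R \<beta> \<notin> R" "\<beta> \<noteq> \<alpha>" "w (refl \<alpha> \<beta>) \<in> Rneg"
      by (auto simp: inversions_def)
    then have "refl \<alpha> \<beta> \<in> inversions w - {\<alpha>}"
      using simple_refl_indivisible_pos_root[OF \<alpha> \<beta>(1-3)] by (auto simp: inversions_def)
    then show "\<beta> \<in> refl \<alpha> ` (inversions w - {\<alpha>})"
      by (rule rev_image_eqI) simp
  qed
  show "refl \<alpha> ` (inversions w - {\<alpha>}) \<subseteq> inversions (w \<circ> refl \<alpha>) - {\<alpha>}"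
  proof
    fix \<beta> assume "\<beta> \<in> refl \<alpha> ` (inversions w - {\<alpha>})"
    then obtain \<gamma> where \<gamma>: "\<gamma> \<in> Rpos" "(1/2) *\<^sub>R \<gamma> \<notin> R" "\<gamma> \<noteq> \<alpha>" "w \<gamma> \<in> Rneg" "\<beta> = refl \<alpha> \<gamma>"
      by (auto simp: inversions_def)
    then show "\<beta> \<in> inversions (w \<circ> refl \<alpha>) - {\<alpha>}"
      using simple_refl_indivisible_pos_root[OF \<alpha> \<gamma>(1-3)] by (auto simp: inversions_def)
  qed
qed

lemma n_inversions_comp_simple_refl:
  assumes \<alpha>: "\<alpha> \<in> S" and w: "w \<in> W"
  shows "w \<alpha> \<in> Rpos \<Longrightarrow> n_inversions (w \<circ> refl \<alpha>) = Suc (n_inversions w)"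
    and "w \<alpha> \<in> Rneg \<Longrightarrow> Suc (n_inversions (w \<circ> refl \<alpha>)) = n_inversions w"
proof -
  have same_rest: "card (inversions (w \<circ> refl \<alpha>) - {\<alpha>}) = card (inversions w - {\<alpha>})"
    unfolding inversions_comp_simple_refl[OF \<alpha>]
    by (rule card_image) (meson bij_refl bij_is_inj inj_on_subset subset_UNIV)
  have \<alpha>_indiv: "\<alpha> \<in> Rpos" "(1/2) *\<^sub>R \<alpha> \<notin> R"
    using \<alpha> simple_roots_Rpos simple_root_indivisible by auto
  have "w (refl \<alpha> \<alpha>) = - w \<alpha>"
    using linear_neg[OF refl_group_linear[OF w]] by simp
  then have in_comp: "\<alpha> \<in> inversions (w \<circ> refl \<alpha>) \<longleftrightarrow> w \<alpha> \<in> Rpos"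
    using \<alpha>_indiv mem_Rneg_iff by (simp add: inversions_def)
  have in_w: "\<alpha> \<in> inversions w \<longleftrightarrow> w \<alpha> \<in> Rneg"
    using \<alpha>_indiv by (simp add: inversions_def)
  show "n_inversions (w \<circ> refl \<alpha>) = Suc (n_inversions w)" if "w \<alpha> \<in> Rpos"
  proof -
    have mem: "\<alpha> \<in> inversions (w \<circ> refl \<alpha>)" and rest: "inversions w - {\<alpha>} = inversions w"
      using that in_comp in_w Rpos_not_Rneg by auto
    have "n_inversions (w \<circ> refl \<alpha>) = Suc (card (inversions (w \<circ> refl \<alpha>) - {\<alpha>}))"
      unfolding n_inversions_def by (rule card_Suc_Diff1[OF finite_inversions mem, symmetric])
    also have "\<dots> = Suc (n_inversions w)"
      by (simp only: same_rest rest n_inversions_def)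
    finally show ?thesis .
  qed
  show "Suc (n_inversions (w \<circ> refl \<alpha>)) = n_inversions w" if "w \<alpha> \<in> Rneg"
  proof -
    have mem: "\<alpha> \<in> inversions w" and rest: "inversions (w \<circ> refl \<alpha>) - {\<alpha>} = inversions (w \<circ> refl \<alpha>)"
      using that in_comp in_w Rpos_not_Rneg by auto
    have "Suc (n_inversions (w \<circ> refl \<alpha>)) = Suc (card (inversions w - {\<alpha>}))"
      by (simp only: same_rest[symmetric] rest n_inversions_def)
    also have "\<dots> = n_inversions w"
      unfolding n_inversions_def by (rule card_Suc_Diff1[OF finite_inversions mem])
    finally show ?thesis .
  qed
qed

lemma n_inversions_refl_prod_le: "set as \<subseteq> S \<Longrightarrow> n_inversions (refl_prod as) \<le> length as"
proof (induction as rule: rev_induct)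
  case (snoc a as)
  have w: "refl_prod as \<in> W" and a: "a \<in> S"
    using snoc.prems by (auto intro: simple_refl_group_in_W refl_prod_in_refl_group)
  then consider "refl_prod as a \<in> Rpos" | "refl_prod as a \<in> Rneg"
    using root_cases W_root simple_roots_roots by blast
  moreover have "n_inversions (refl_prod as) \<le> length as"
    using snoc by auto
  ultimately show ?case
    unfolding refl_prod_snoc length_append_singleton
    using n_inversions_comp_simple_refl[OF a w] by cases linarith+
qed simp

text \<open>At a position \<open>i\<close> where the suffix \<open>u = refl_prod (drop (Suc i) bs)\<close> keeps \<open>\<alpha>\<close> positive but
  \<open>refl (bs ! i) \<circ> u\<close> does not, \<open>u \<alpha>\<close> is a multiple of \<open>bs ! i\<close>, so \<open>u \<circ> refl \<alpha> = refl (bs ! i) \<circ> u\<close>.\<close>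
lemma exchange_condition:
  assumes bs: "set bs \<subseteq> S" and \<alpha>: "\<alpha> \<in> Rpos" and neg: "refl_prod bs \<alpha> \<in> Rneg"
  shows "\<exists>i<length bs. refl_prod bs \<circ> refl \<alpha> = refl_prod (take i bs @ drop (Suc i) bs)"
proof -
  let ?P = "\<lambda>i. refl_prod (drop i bs) \<alpha> \<in> Rpos"
  have "\<not> ?P 0" using neg Rpos_not_Rneg by (simp only: drop_0) blast
  moreover have "?P (length bs)" using \<alpha> by simp
  ultimately obtain i where i: "i < length bs" "\<not> ?P i" "?P (Suc i)"
    using nat_transition_point[of ?P] by blast
  define u where "u = refl_prod (drop (Suc i) bs)"
  have drop_i: "drop i bs = bs ! i # drop (Suc i) bs" using i(1) by (simp add: Cons_nth_drop_Suc)
  have bi: "bs ! i \<in> S" using bs i(1) nth_mem by blast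
  have u: "u \<in> refl_group S"
    unfolding u_def using bs set_drop_subset[of "Suc i" bs] by (intro refl_prod_in_refl_group) auto
  have u\<alpha>: "u \<alpha> \<in> Rpos" using i(3) by (simp add: u_def)
  have "refl (bs ! i) (u \<alpha>) \<in> R"
    using u\<alpha> refl_root bi simple_roots_roots by (auto simp: mem_Rpos)
  moreover have "refl (bs ! i) (u \<alpha>) \<notin> Rpos" using i(2) by (simp add: drop_i u_def)
  ultimately have "refl (bs ! i) (u \<alpha>) \<in> Rneg" using root_cases by blast
  then obtain c where "c > 0" "u \<alpha> = c *\<^sub>R bs ! i"
    using simple_refl_neg_imp_proportional[OF bi u\<alpha>] by blast
  then have "refl (u \<alpha>) = refl (bs ! i)" by (simp add: refl_scaleR)
  then have conj: "u \<circ> refl \<alpha> = refl (bs ! i) \<circ> u"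
    using orthogonal_map_comp_refl[OF refl_group_linear[OF u] refl_group_inner[OF u]] by simp
  have "refl_prod bs = refl_prod (take i bs) \<circ> refl_prod (drop i bs)"
    by (simp flip: refl_prod_append)
  also have "\<dots> = refl_prod (take i bs) \<circ> refl (bs ! i) \<circ> u"
    by (simp add: drop_i u_def o_assoc)
  finally have "refl_prod bs \<circ> refl \<alpha> = refl_prod (take i bs) \<circ> refl (bs ! i) \<circ> (u \<circ> refl \<alpha>)"
    by (simp add: o_assoc)
  also have "\<dots> = refl_prod (take i bs) \<circ> u"
    by (simp only: conj comp_assoc refl_comp_refl_comp)
  also have "\<dots> = refl_prod (take i bs @ drop (Suc i) bs)"
    by (simp add: u_def)
  finally show ?thesis using i(1) by blast
qed

lemma reduced_word_of_word:
  assumes "set as \<subseteq> D" "D \<subseteq> S"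
  shows "\<exists>bs. set bs \<subseteq> D \<and> refl_prod bs = refl_prod as \<and> length bs = n_inversions (refl_prod as)"
  using assms(1)
proof (induction as rule: rev_induct)
  case (snoc a as)
  then obtain bs where bs: "set bs \<subseteq> D" "refl_prod bs = refl_prod as"
    "length bs = n_inversions (refl_prod as)" by auto
  have aD: "a \<in> D" and a: "a \<in> S" using snoc.prems assms(2) by auto
  have w: "refl_prod as \<in> W"
    using snoc.prems assms(2) by (auto intro: simple_refl_group_in_W refl_prod_in_refl_group)
  then consider "refl_prod as a \<in> Rpos" | "refl_prod as a \<in> Rneg"
    using root_cases W_root a simple_roots_roots by blast
  then show ?case
  proof cases
    case 1
    then have "length (bs @ [a]) = n_inversions (refl_prod (as @ [a]))"
      unfolding refl_prod_snoc length_append_singleton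
      using n_inversions_comp_simple_refl(1)[OF a w] bs(3) by linarith
    moreover have "refl_prod (bs @ [a]) = refl_prod (as @ [a])"
      using bs(2) by (simp only: refl_prod_append)
    moreover have "set (bs @ [a]) \<subseteq> D"
      using bs(1) aD by simp
    ultimately show ?thesis by blast
  next
    case 2
    obtain i where i: "i < length bs" "refl_prod bs \<circ> refl a = refl_prod (take i bs @ drop (Suc i) bs)"
      using exchange_condition[of bs a] bs 2 a simple_roots_Rpos assms(2) by auto
    have "set (take i bs @ drop (Suc i) bs) \<subseteq> D"
      using bs(1) set_take_subset[of i bs] set_drop_subset[of "Suc i" bs] by auto
    moreover have "length (take i bs @ drop (Suc i) bs) = length bs - 1"
      using i(1) by simp
    then have "length (take i bs @ drop (Suc i) bs) = n_inversions (refl_prod (as @ [a]))"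
      unfolding refl_prod_snoc using bs(3) n_inversions_comp_simple_refl(2)[OF a w 2] by linarith
    moreover have "refl_prod (take i bs @ drop (Suc i) bs) = refl_prod (as @ [a])"
      using i(2) bs(2) by simp
    ultimately show ?thesis by blast
  qed
qed simp

lemma reduced_word_exists:
  assumes "w \<in> refl_group D" "D \<subseteq> S"
  obtains bs where "set bs \<subseteq> D" "refl_prod bs = w" "length bs = n_inversions w"
  using assms reduced_word_of_word refl_group_iff_refl_prod by metis

lemma n_inversions_eq_0_imp_id:
  "w \<in> refl_group D \<Longrightarrow> D \<subseteq> S \<Longrightarrow> n_inversions w = 0 \<Longrightarrow> w = id"
  by (erule reduced_word_exists) auto

lemma descent:
  assumes w: "w \<in> refl_group D" and D: "D \<subseteq> S" and pos: "n_inversions w > 0"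
  obtains \<alpha> where "\<alpha> \<in> D" "w \<alpha> \<in> Rneg" "w \<circ> refl \<alpha> \<in> refl_group D"
    "n_inversions (w \<circ> refl \<alpha>) < n_inversions w"
proof -
  obtain bs where bs: "set bs \<subseteq> D" "refl_prod bs = w" "length bs = n_inversions w"
    using reduced_word_exists[OF w D] .
  then obtain cs \<alpha> where cs: "bs = cs @ [\<alpha>]" using pos by (metis length_0_conv less_irrefl rev_exhaust)
  have \<alpha>D: "\<alpha> \<in> D" and \<alpha>: "\<alpha> \<in> S" and csD: "set cs \<subseteq> D" using bs(1) cs D by auto
  have wc: "w \<circ> refl \<alpha> = refl_prod cs" using bs(2) cs by (auto simp: o_assoc)
  have "n_inversions (refl_prod cs) \<le> length cs"
    using csD D by (intro n_inversions_refl_prod_le) auto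
  then have less: "n_inversions (w \<circ> refl \<alpha>) < n_inversions w"
    using wc bs(3) cs by simp
  have "w \<in> W" using w D by (rule simple_refl_group_in_W)
  then have "w \<alpha> \<in> R" "w \<alpha> \<notin> Rpos"
    using W_root \<alpha> simple_roots_roots less n_inversions_comp_simple_refl(1)[OF \<alpha>] by auto
  then have "w \<alpha> \<in> Rneg" using root_cases by blast
  moreover have "w \<circ> refl \<alpha> \<in> refl_group D" using wc csD refl_prod_in_refl_group by simp
  ultimately show ?thesis using that \<alpha>D less by blast
qed

section \<open>Generation by simple reflections and fundamental domains\<close>

text \<open>Induction on the height: for a simple root \<open>\<gamma>\<close> acute to \<open>\<beta>\<close> and not proportional to it,
  \<open>refl \<gamma> \<beta>\<close> is a lower positive root and \<open>refl \<beta> = refl \<gamma> \<circ> refl (refl \<gamma> \<beta>) \<circ> refl \<gamma>\<close>.\<close>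
lemma refl_pos_root_in_simple_refl_group: "\<beta> \<in> Rpos \<Longrightarrow> refl \<beta> \<in> refl_group S"
proof (induction "card {\<gamma>\<in>Rpos. \<gamma> \<bullet> h < \<beta> \<bullet> h}" arbitrary: \<beta> rule: less_induct)
  case (less \<beta>)
  have \<beta>: "\<beta> \<in> R" "\<beta> \<bullet> h > 0" using less.prems by (simp_all add: mem_Rpos)
  then have "\<beta> \<bullet> \<beta> > 0" using root_nonzero by simp
  then obtain \<gamma> where \<gamma>: "\<gamma> \<in> S" "\<beta> \<bullet> \<gamma> > 0"
    using pos_root_acute_imp_simple_acute[OF less.prems] by blast
  show ?case
  proof (cases "\<exists>c. \<beta> = c *\<^sub>R \<gamma>")
    case True
    then obtain c where "\<beta> = c *\<^sub>R \<gamma>" "c \<noteq> 0" using root_nonzero[OF \<beta>(1)] by auto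
    then show ?thesis using refl_group_refl[OF \<gamma>(1)] by (simp add: refl_scaleR)
  next
    case False
    define \<beta>' where "\<beta>' = refl \<gamma> \<beta>"
    have "\<beta>' \<in> R" unfolding \<beta>'_def using refl_root \<beta>(1) \<gamma>(1) simple_roots_roots by blast
    moreover have "\<beta>' \<notin> Rneg"
      using simple_refl_neg_imp_proportional[OF \<gamma>(1) less.prems] False by (auto simp: \<beta>'_def)
    ultimately have \<beta>'_pos: "\<beta>' \<in> Rpos" using root_cases by blast
    have "\<gamma> \<bullet> \<gamma> > 0" "\<gamma> \<bullet> h > 0" using \<gamma> simple_root_pos by auto
    then have "(2 * (\<beta> \<bullet> \<gamma>) / (\<gamma> \<bullet> \<gamma>)) * (\<gamma> \<bullet> h) > 0" using \<gamma>(2) by simp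
    then have "\<beta>' \<bullet> h < \<beta> \<bullet> h" by (simp add: \<beta>'_def refl_def inner_diff_left)
    then have "card {\<gamma>\<in>Rpos. \<gamma> \<bullet> h < \<beta>' \<bullet> h} < card {\<gamma>\<in>Rpos. \<gamma> \<bullet> h < \<beta> \<bullet> h}"
      using \<beta>'_pos by (intro psubset_card_mono) (use finite_Rpos in auto)
    then have "refl \<beta>' \<in> refl_group S" using less.hyps \<beta>'_pos by blast
    moreover have "refl \<gamma> \<circ> refl \<beta> = refl \<beta>' \<circ> refl \<gamma>"
      unfolding \<beta>'_def by (rule orthogonal_map_comp_refl[OF refl_linear refl_inner])
    then have "refl \<gamma> \<circ> (refl \<gamma> \<circ> refl \<beta>) = refl \<gamma> \<circ> (refl \<beta>' \<circ> refl \<gamma>)"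
      by (rule arg_cong)
    then have "refl \<beta> = refl \<gamma> \<circ> (refl \<beta>' \<circ> refl \<gamma>)"
      by (simp only: refl_comp_refl_comp)
    ultimately show ?thesis
      using \<gamma>(1) by (simp add: refl_group_comp refl_group_refl)
  qed
qed

lemma W_eq_simple_refl_group: "W = refl_group S"
proof
  show "W \<subseteq> refl_group S"
  proof
    fix w assume "w \<in> W"
    then show "w \<in> refl_group S"
    proof (induction rule: refl_group.induct)
      case (step w \<alpha>)
      then consider "\<alpha> \<in> Rpos" | "- \<alpha> \<in> Rpos" using root_cases mem_Rneg_iff by blast
      then have "refl \<alpha> \<in> refl_group S"
        using refl_pos_root_in_simple_refl_group[of \<alpha>] refl_pos_root_in_simple_refl_group[of "- \<alpha>"]
        by cases (simp_all add: refl_uminus)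
      then show ?case using step.IH refl_group_comp by blast
    qed (rule refl_group.id)
  qed
  show "refl_group S \<subseteq> W"
    using simple_refl_group_in_W by blast
qed

lemma n_inversions_inv_le:
  assumes w: "w \<in> W"
  shows "n_inversions w \<le> n_inversions (inv w)"
proof -
  have lin: "linear (inv w)" using refl_group_linear inv_in_refl_group w by blast
  have inj: "inj_on (\<lambda>\<beta>. - w \<beta>) (inversions w)"
  proof (rule inj_onI)
    fix \<beta> \<gamma> assume "- w \<beta> = - w \<gamma>"
    then have "inv w (w \<beta>) = inv w (w \<gamma>)" by simp
    then show "\<beta> = \<gamma>" using w by simp
  qed
  have "- w \<beta> \<in> inversions (inv w)" if \<beta>: "\<beta> \<in> inversions w" for \<beta>
  proof -
    have \<beta>': "\<beta> \<in> Rpos" "(1/2) *\<^sub>R \<beta> \<notin> R" "w \<beta> \<in> Rneg" using \<beta> by (auto simp: inversions_def)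
    have "- w \<beta> \<in> Rpos" using \<beta>'(3) mem_Rneg_iff by blast
    moreover have "inv w ((1/2) *\<^sub>R - w \<beta>) = - ((1/2) *\<^sub>R \<beta>)"
      using w by (simp add: linear_scale[OF lin] linear_neg[OF lin])
    then have "(1/2) *\<^sub>R - w \<beta> \<notin> R"
      using \<beta>'(2) W_root[OF inv_in_refl_group[OF w]] uminus_root by fastforce
    moreover have "inv w (- w \<beta>) \<in> Rneg"
      using w \<beta>'(1) mem_Rneg_iff by (simp add: linear_neg[OF lin])
    ultimately show ?thesis by (simp add: inversions_def)
  qed
  then show ?thesis unfolding n_inversions_def
    using card_inj_on_le[OF inj _ finite_inversions] by blast
qed

lemma n_inversions_inv: "w \<in> W \<Longrightarrow> n_inversions (inv w) = n_inversions w"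
  using n_inversions_inv_le[of w] n_inversions_inv_le[OF inv_in_refl_group, of w]
  by (simp add: inv_inv_eq refl_group_bij)

text \<open>Induction on the number of inversions: a descent \<open>\<alpha>\<close> of \<open>g\<close> satisfies
  \<open>0 \<le> x \<bullet> \<alpha> = y \<bullet> g \<alpha> \<le> 0\<close>, so \<open>refl \<alpha>\<close> fixes \<open>x\<close>.\<close>
lemma parabolic_fundamental_domain:
  assumes D: "D \<subseteq> S"
    and x: "\<forall>\<beta>\<in>Rpos \<inter> span D. x \<bullet> \<beta> \<ge> 0" and y: "\<forall>\<beta>\<in>Rpos \<inter> span D. y \<bullet> \<beta> \<ge> 0"
    and g: "g \<in> refl_group D" "g x = y"
  shows "x = y \<and> g \<in> refl_group {\<alpha>\<in>D. x \<bullet> \<alpha> = 0}"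
  using g
proof (induction "n_inversions g" arbitrary: g rule: less_induct)
  case (less g)
  show ?case
  proof (cases "n_inversions g = 0")
    case True
    then have "g = id" using n_inversions_eq_0_imp_id[OF less.prems(1) D] by blast
    then show ?thesis using less.prems(2) refl_group.id by simp
  next
    case False
    then obtain \<alpha> where \<alpha>: "\<alpha> \<in> D" "g \<alpha> \<in> Rneg" "g \<circ> refl \<alpha> \<in> refl_group D"
      "n_inversions (g \<circ> refl \<alpha>) < n_inversions g"
      using descent[OF less.prems(1) D] by blast
    have "\<alpha> \<in> Rpos \<inter> span D" using \<alpha>(1) D simple_roots_Rpos span_base by blast
    then have "x \<bullet> \<alpha> \<ge> 0" using x by blast
    have "- g \<alpha> \<in> Rpos \<inter> span D"
      using \<alpha>(2) mem_Rneg_iff refl_group_span[OF less.prems(1) span_base[OF \<alpha>(1)]] span_neg by blast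
    then have "y \<bullet> g \<alpha> \<le> 0" using y by force
    moreover have "y \<bullet> g \<alpha> = x \<bullet> \<alpha>"
      using refl_group_inner[OF less.prems(1), of x \<alpha>] less.prems(2) by simp
    ultimately have x\<alpha>: "x \<bullet> \<alpha> = 0" using \<open>x \<bullet> \<alpha> \<ge> 0\<close> by simp
    then have "(g \<circ> refl \<alpha>) x = y" using less.prems(2) by (simp add: refl_orthogonal)
    then have IH: "x = y \<and> g \<circ> refl \<alpha> \<in> refl_group {\<alpha>\<in>D. x \<bullet> \<alpha> = 0}"
      using less.hyps[OF \<alpha>(4) \<alpha>(3)] by blast
    have "refl \<alpha> \<in> refl_group {\<alpha>\<in>D. x \<bullet> \<alpha> = 0}" using \<alpha>(1) x\<alpha> by (intro refl_group_refl) simp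
    then have "(g \<circ> refl \<alpha>) \<circ> refl \<alpha> \<in> refl_group {\<alpha>\<in>D. x \<bullet> \<alpha> = 0}"
      using IH refl_group_comp by blast
    then show ?thesis using IH by (simp add: comp_assoc)
  qed
qed

lemma fundamental_domain:
  assumes "\<forall>\<beta>\<in>Rpos. x \<bullet> \<beta> \<ge> 0" "\<forall>\<beta>\<in>Rpos. y \<bullet> \<beta> \<ge> 0" "g \<in> W" "g x = y"
  shows "x = y \<and> g \<in> refl_group {\<alpha>\<in>S. x \<bullet> \<alpha> = 0}"
  using assms by (intro parabolic_fundamental_domain) (auto simp: W_eq_simple_refl_group)

text \<open>A \<open>w\<close> minimising the height \<open>w x \<bullet> h\<close> works: reflecting \<open>w x\<close> in a positive root acute to
  it would lower the height.\<close>
lemma ex_antidominant_in_orbit: "\<exists>w\<in>W. \<forall>\<beta>\<in>Rpos. w x \<bullet> \<beta> \<le> 0"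
proof -
  let ?m = "Min ((\<lambda>w. w x \<bullet> h) ` W)"
  have fin: "finite ((\<lambda>w. w x \<bullet> h) ` W)" using finite_W by simp
  moreover have "(\<lambda>w. w x \<bullet> h) ` W \<noteq> {}" using refl_group.id by blast
  ultimately have "?m \<in> (\<lambda>w. w x \<bullet> h) ` W" by (rule Min_in)
  then obtain w where w: "w \<in> W" "?m = w x \<bullet> h" by (rule imageE)
  have min: "w x \<bullet> h \<le> w' x \<bullet> h" if "w' \<in> W" for w'
    unfolding w(2)[symmetric] using fin imageI[OF that] by (rule Min_le)
  have "w x \<bullet> \<beta> \<le> 0" if \<beta>: "\<beta> \<in> Rpos" for \<beta>
  proof (rule ccontr)
    assume "\<not> w x \<bullet> \<beta> \<le> 0"
    then have "(2 * (w x \<bullet> \<beta>) / (\<beta> \<bullet> \<beta>)) * (\<beta> \<bullet> h) > 0"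
      using \<beta> root_nonzero by (simp add: mem_Rpos)
    then have "(refl \<beta> \<circ> w) x \<bullet> h < w x \<bullet> h"
      by (simp add: refl_def inner_diff_left)
    moreover have "refl \<beta> \<circ> w \<in> W" using refl_group.step[OF w(1)] \<beta> by (simp add: mem_Rpos)
    ultimately show False using min by (meson not_le)
  qed
  then show ?thesis using w(1) by blast
qed

section \<open>Minimal antidominant elements and shifted weights\<close>

lemma weight_lattice_W:
  assumes w: "w \<in> W" and l: "l \<in> weight_lattice R"
  shows "w l \<in> weight_lattice R"
  unfolding weight_lattice_def
proof (intro CollectI ballI)
  fix \<alpha> assume "\<alpha> \<in> R"
  then have "inv w \<alpha> \<in> R" using W_root inv_in_refl_group w by blast
  moreover have "w l \<bullet> \<alpha> = l \<bullet> inv w \<alpha>" "\<alpha> \<bullet> \<alpha> = inv w \<alpha> \<bullet> inv w \<alpha>"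
    using refl_group_inner[OF w, of l "inv w \<alpha>"] refl_group_inner[OF w, of "inv w \<alpha>" "inv w \<alpha>"] w
    by simp_all
  ultimately show "2 * (w l \<bullet> \<alpha>) / (\<alpha> \<bullet> \<alpha>) \<in> \<int>"
    using l by (simp add: weight_lattice_def)
qed

lemma mem_antidominant_iff:
  "x \<in> antidominant R h \<longleftrightarrow> x \<in> weight_lattice R \<and> (\<forall>\<alpha>\<in>Rpos. x \<bullet> \<alpha> \<le> 0)"
proof -
  have "x \<in> weight_lattice R \<longleftrightarrow> - x \<in> weight_lattice R" for x
    by (auto simp: weight_lattice_def)
  then show ?thesis
    unfolding antidominant_def dominant_def by (force simp: image_iff)
qed

lemma weyl_length_eq_n_inversions:
  assumes "w \<in> W"
  shows "weyl_length R h w = n_inversions w"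
  unfolding weyl_length_def refl_prod_def[symmetric]
proof (rule Least_equality)
  obtain bs where "set bs \<subseteq> S" "refl_prod bs = w" "length bs = n_inversions w"
    using reduced_word_exists assms W_eq_simple_refl_group by blast
  then show "\<exists>as. length as = n_inversions w \<and> set as \<subseteq> S \<and> w = refl_prod as" by blast
next
  fix n assume "\<exists>as. length as = n \<and> set as \<subseteq> S \<and> w = refl_prod as"
  then show "n_inversions w \<le> n" using n_inversions_refl_prod_le by blast
qed

lemma null_pos_root_inverted_imp_simple:
  assumes \<mu>: "\<forall>\<alpha>\<in>Rpos. \<mu> \<bullet> \<alpha> \<le> 0" and v: "v \<in> W" and \<gamma>: "\<gamma> \<in> Rpos"
  shows "\<mu> \<bullet> \<gamma> = 0 \<Longrightarrow> v \<gamma> \<in> Rneg \<Longrightarrow> \<exists>\<delta>\<in>S. \<mu> \<bullet> \<delta> = 0 \<and> v \<delta> \<in> Rneg"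
  using \<gamma>
proof (induction rule: pos_root_induct)
  case (sum \<beta>1 \<beta>2)
  have "\<mu> \<bullet> \<beta>1 \<le> 0" "\<mu> \<bullet> \<beta>2 \<le> 0" using \<mu> sum.hyps by auto
  then have "\<mu> \<bullet> \<beta>1 = 0" "\<mu> \<bullet> \<beta>2 = 0"
    using sum.prems(1) by (simp_all add: inner_add_right)
  moreover have "v \<beta>1 \<bullet> h + v \<beta>2 \<bullet> h < 0"
    using sum.prems(2) linear_add[OF refl_group_linear[OF v]] by (simp add: inner_add_left)
  then have "v \<beta>1 \<in> Rneg \<or> v \<beta>2 \<in> Rneg"
    using sum.hyps W_root[OF v] by (auto simp: mem_Rpos)
  ultimately show ?case using sum.IH by blast
qed blast

lemma shorten_to_antidominant:
  assumes w: "w \<in> W" and anti: "\<forall>\<alpha>\<in>Rpos. w l \<bullet> \<alpha> \<le> 0"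
    and \<beta>: "\<beta> \<in> Rpos" "w \<beta> \<in> Rneg" "l \<bullet> \<beta> \<le> 0"
  obtains w' where "w' \<in> W" "w' l = w l" "n_inversions w' < n_inversions w"
proof -
  have iw: "inv w \<in> W" and lin: "linear (inv w)"
    using w inv_in_refl_group refl_group_linear by blast+
  have \<gamma>: "- w \<beta> \<in> Rpos" using \<beta>(2) mem_Rneg_iff by blast
  have "w l \<bullet> - w \<beta> = - (l \<bullet> \<beta>)" using refl_group_inner[OF w] by simp
  then have "w l \<bullet> - w \<beta> = 0" using anti \<gamma> \<beta>(3) by force
  moreover have "inv w (- w \<beta>) \<in> Rneg"
    using w \<beta>(1) mem_Rneg_iff by (simp add: linear_neg[OF lin])
  ultimately obtain \<delta> where \<delta>: "\<delta> \<in> S" "w l \<bullet> \<delta> = 0" "inv w \<delta> \<in> Rneg"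
    using null_pos_root_inverted_imp_simple[OF anti iw \<gamma>] by blast
  have \<delta>R: "\<delta> \<in> R" using \<delta>(1) simple_roots_roots by blast
  show ?thesis
  proof
    show W: "refl \<delta> \<circ> w \<in> W" using refl_group.step[OF w \<delta>R] .
    show "(refl \<delta> \<circ> w) l = w l" using \<delta>(2) by (simp add: refl_orthogonal)
    have "n_inversions (refl \<delta> \<circ> w) = n_inversions (inv w \<circ> refl \<delta>)"
      using n_inversions_inv[OF W] refl_group_inv_comp_refl[OF w] by simp
    also have "Suc \<dots> = n_inversions w"
      using n_inversions_comp_simple_refl(2)[OF \<delta>(1) iw \<delta>(3)] n_inversions_inv[OF w] by simp
    finally show "n_inversions (refl \<delta> \<circ> w) < n_inversions w" by simp
  qed
qed

lemma minimal_antidominant_inversions: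
  assumes w: "w \<in> W" "\<forall>\<alpha>\<in>Rpos. w l \<bullet> \<alpha> \<le> 0"
    and min: "\<And>w'. w' \<in> W \<Longrightarrow> \<forall>\<alpha>\<in>Rpos. w' l \<bullet> \<alpha> \<le> 0 \<Longrightarrow> n_inversions w \<le> n_inversions w'"
    and \<beta>: "\<beta> \<in> Rpos"
  shows "w \<beta> \<in> Rneg \<longleftrightarrow> l \<bullet> \<beta> > 0"
proof
  assume "l \<bullet> \<beta> > 0"
  moreover have "w l \<bullet> w \<beta> = l \<bullet> \<beta>" by (rule refl_group_inner[OF w(1)])
  ultimately have "w \<beta> \<notin> Rpos" using w(2) by force
  then show "w \<beta> \<in> Rneg" using root_cases W_root[OF w(1)] \<beta> by (auto simp: mem_Rpos)
next
  assume "w \<beta> \<in> Rneg"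
  show "l \<bullet> \<beta> > 0"
  proof (rule ccontr)
    assume "\<not> l \<bullet> \<beta> > 0"
    then obtain w' where "w' \<in> W" "w' l = w l" "n_inversions w' < n_inversions w"
      using shorten_to_antidominant[OF w \<beta>] \<open>w \<beta> \<in> Rneg\<close> by force
    then show False using min w(2) by fastforce
  qed
qed

lemma pos_preserving_eq_id:
  assumes "\<And>\<beta>. \<beta> \<in> Rpos \<Longrightarrow> u \<beta> \<in> Rpos" "u \<in> W"
  shows "u = id"
proof -
  have "inversions u = {}"
    unfolding inversions_def using assms(1) Rpos_not_Rneg by blast
  then have "n_inversions u = 0"
    by (simp add: n_inversions_def)
  then show ?thesis
    using n_inversions_eq_0_imp_id assms(2) W_eq_simple_refl_group by blast
qed

lemma eq_if_same_inversions:
  assumes w: "w1 \<in> W" "w2 \<in> W" and same: "\<And>\<beta>. \<beta> \<in> Rpos \<Longrightarrow> w1 \<beta> \<in> Rneg \<longleftrightarrow> w2 \<beta> \<in> Rneg"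
  shows "w1 = w2"
proof -
  define u where "u = w2 \<circ> inv w1"
  have u: "u \<in> W" unfolding u_def using w inv_in_refl_group refl_group_comp by blast
  have "u \<beta> \<in> Rpos" if \<beta>: "\<beta> \<in> Rpos" for \<beta>
  proof -
    define \<alpha> where "\<alpha> = inv w1 \<beta>"
    have \<alpha>: "\<alpha> \<in> R" "w1 \<alpha> = \<beta>" "u \<beta> = w2 \<alpha>"
      using w(1) \<beta> W_root inv_in_refl_group by (auto simp: \<alpha>_def u_def mem_Rpos)
    have lin: "linear w1" "linear w2" using refl_group_linear w by blast+
    consider "\<alpha> \<in> Rpos" | "- \<alpha> \<in> Rpos" using root_cases[OF \<alpha>(1)] mem_Rneg_iff by blast
    then show ?thesis
    proof cases
      case 1
      then have "w2 \<alpha> \<notin> Rneg" using same \<alpha>(2) \<beta> Rpos_not_Rneg by blast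
      then show ?thesis using \<alpha> root_cases W_root[OF w(2)] by auto
    next
      case 2
      have "w1 (- \<alpha>) \<in> Rneg"
        using \<alpha>(2) \<beta> mem_Rneg_iff by (simp add: linear_neg[OF lin(1)])
      then have "- w2 (- \<alpha>) \<in> Rpos"
        using same[OF 2] mem_Rneg_iff by blast
      then show ?thesis using \<alpha>(3) by (simp add: linear_neg[OF lin(2)])
    qed
  qed
  then have "u = id" using u by (rule pos_preserving_eq_id)
  have "w2 = w2 \<circ> (inv w1 \<circ> w1)"
    using w(1) by (simp add: fun_eq_iff)
  also have "\<dots> = u \<circ> w1"
    unfolding u_def by (rule comp_assoc[symmetric])
  finally show ?thesis
    using \<open>u = id\<close> by simp
qed

text \<open>Since \<open>vmin\<close> is defined by \<open>THE\<close>, the minimal element has to be unique: by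
  \<open>minimal_antidominant_inversions\<close> its inversions are the positive roots \<open>\<beta>\<close> with \<open>l \<bullet> \<beta> > 0\<close>.\<close>
lemma vmin_spec:
  assumes l: "l \<in> weight_lattice R"
  shows "vmin R h l \<in> W \<and> vmin R h l l \<in> antidominant R h"
proof -
  let ?anti = "\<lambda>w. \<forall>\<alpha>\<in>Rpos. w l \<bullet> \<alpha> \<le> 0"
  let ?P = "\<lambda>w. w \<in> W \<and> w l \<in> antidominant R h \<and>
      (\<forall>w'\<in>W. w' l \<in> antidominant R h \<longrightarrow> weyl_length R h w \<le> weyl_length R h w')"
  have anti_iff: "w l \<in> antidominant R h \<longleftrightarrow> ?anti w" if "w \<in> W" for w
    using mem_antidominant_iff weight_lattice_W[OF that l] by blast
  have P_iff: "?P w \<longleftrightarrow> w \<in> W \<and> ?anti w \<and> (\<forall>w'\<in>W. ?anti w' \<longrightarrow> n_inversions w \<le> n_inversions w')"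
    for w using anti_iff weyl_length_eq_n_inversions by auto
  obtain w0 where "w0 \<in> W \<and> ?anti w0" using ex_antidominant_in_orbit by blast
  then obtain w where w: "w \<in> W \<and> ?anti w" "\<And>w'. w' \<in> W \<and> ?anti w' \<Longrightarrow> n_inversions w \<le> n_inversions w'"
    using ex_has_least_nat[of "\<lambda>w. w \<in> W \<and> ?anti w" w0 n_inversions] by blast
  have "?P w" using w P_iff by blast
  moreover have "w' = w" if "?P w'" for w'
  proof (rule eq_if_same_inversions)
    show "w' \<in> W" "w \<in> W" using that w by auto
    fix \<beta> assume "\<beta> \<in> Rpos"
    then show "w' \<beta> \<in> Rneg \<longleftrightarrow> w \<beta> \<in> Rneg"
      using minimal_antidominant_inversions[of w' l] minimal_antidominant_inversions[of w l]
        that w P_iff by auto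
  qed
  ultimately have "?P (vmin R h l)" unfolding vmin_def by (rule theI)
  then show ?thesis by blast
qed

text \<open>\<open>refl \<alpha>\<close> permutes the positive roots it keeps positive and negates their pairing with \<open>\<alpha>\<close>,
  so only the positive multiples of \<open>\<alpha>\<close> contribute.\<close>
lemma rho_simple_root_nonneg:
  assumes k: "multiplicity R k" and \<alpha>: "\<alpha> \<in> S"
  shows "rho R h k \<bullet> \<alpha> \<ge> 0"
proof -
  have \<alpha>R: "\<alpha> \<in> R" using \<alpha> simple_roots_roots by blast
  define F where "F \<beta> = k \<beta> * (\<beta> \<bullet> \<alpha>)" for \<beta>
  define Q where "Q = {\<beta>\<in>Rpos. refl \<alpha> \<beta> \<in> Rpos}"
  have "Q \<subseteq> Rpos" by (auto simp: Q_def)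
  then have "(\<Sum>\<beta>\<in>Rpos. F \<beta>) = (\<Sum>\<beta>\<in>Rpos - Q. F \<beta>) + (\<Sum>\<beta>\<in>Q. F \<beta>)"
    using finite_Rpos by (rule sum.subset_diff)
  moreover have "(\<Sum>\<beta>\<in>Q. F \<beta>) = 0"
  proof (rule sum_eq_0_if_involution_negates)
    show "finite Q" using finite_Rpos by (simp add: Q_def)
    fix \<beta> assume \<beta>: "\<beta> \<in> Q"
    then show "refl \<alpha> \<beta> \<in> Q" "refl \<alpha> (refl \<alpha> \<beta>) = \<beta>" by (auto simp: Q_def)
    have "k (refl \<alpha> \<beta>) = k \<beta>"
      using k \<beta> refl_group_refl[OF \<alpha>R] by (auto simp: multiplicity_def Q_def mem_Rpos)
    moreover have "refl \<alpha> \<beta> \<bullet> \<alpha> = - (\<beta> \<bullet> \<alpha>)"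
      using refl_inner[of \<alpha> \<beta> \<alpha>] by simp
    ultimately show "F (refl \<alpha> \<beta>) = - F \<beta>" by (simp add: F_def)
  qed
  moreover have "(\<Sum>\<beta>\<in>Rpos - Q. F \<beta>) \<ge> 0"
  proof (rule sum_nonneg)
    fix \<beta> assume \<beta>: "\<beta> \<in> Rpos - Q"
    then have "refl \<alpha> \<beta> \<in> Rneg"
      using root_cases refl_root[OF \<alpha>R] by (auto simp: Q_def mem_Rpos)
    then obtain c where "c > 0" "\<beta> = c *\<^sub>R \<alpha>"
      using simple_refl_neg_imp_proportional[OF \<alpha>] \<beta> by blast
    moreover have "k \<beta> \<ge> 0" using k \<beta> by (auto simp: multiplicity_def mem_Rpos)
    ultimately show "F \<beta> \<ge> 0" by (simp add: F_def)
  qed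
  moreover have "rho R h k \<bullet> \<alpha> = (1/2) * (\<Sum>\<beta>\<in>Rpos. F \<beta>)"
    by (simp add: rho_def F_def inner_sum_left)
  ultimately show ?thesis by simp
qed

lemma rho_dominant:
  assumes k: "multiplicity R k" and \<beta>: "\<beta> \<in> Rpos"
  shows "rho R h k \<bullet> \<beta> \<ge> 0"
  using \<beta> by (induction rule: pos_root_induct) (simp_all add: rho_simple_root_nonneg[OF k] inner_add_right)

lemma shifted_eq_inv_vmin:
  assumes "l \<in> weight_lattice R"
  shows "shifted R h k l = inv (vmin R h l) (vmin R h l l - rho R h k)"
proof -
  have v: "vmin R h l \<in> W" using vmin_spec assms by blast
  then show ?thesis
    unfolding shifted_def using linear_diff[OF refl_group_linear[OF inv_in_refl_group[OF v]]] by simp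
qed

lemma antidominant_shift_orbit:
  assumes \<rho>: "\<forall>\<beta>\<in>Rpos. \<rho> \<bullet> \<beta> \<ge> 0"
    and \<mu>: "\<forall>\<beta>\<in>Rpos. \<mu> \<bullet> \<beta> \<le> 0" and \<mu>': "\<forall>\<beta>\<in>Rpos. \<mu>' \<bullet> \<beta> \<le> 0"
    and g: "g \<in> W" "g (\<mu> - \<rho>) = \<mu>' - \<rho>"
  shows "\<mu> = \<mu>' \<and> g \<mu> = \<mu>"
proof -
  have "g (\<rho> - \<mu>) = - g (\<mu> - \<rho>)"
    using linear_neg[OF refl_group_linear[OF g(1)], of "\<mu> - \<rho>"] by simp
  then have "g (\<rho> - \<mu>) = \<rho> - \<mu>'" using g(2) by simp
  moreover have "(\<rho> - \<nu>) \<bullet> \<beta> \<ge> 0" if "\<nu> \<in> {\<mu>, \<mu>'}" "\<beta> \<in> Rpos" for \<nu> \<beta>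
  proof -
    have "\<rho> \<bullet> \<beta> \<ge> 0" "\<nu> \<bullet> \<beta> \<le> 0" using \<rho> \<mu> \<mu>' that by auto
    then show ?thesis by (simp add: inner_diff_left)
  qed
  ultimately have eq: "\<rho> - \<mu> = \<rho> - \<mu>'" and stab: "g \<in> refl_group {\<alpha>\<in>S. (\<rho> - \<mu>) \<bullet> \<alpha> = 0}"
    using fundamental_domain[of "\<rho> - \<mu>" "\<rho> - \<mu>'" g] g(1) by blast+
  have "refl \<alpha> \<mu> = \<mu>" if "\<alpha> \<in> S" "(\<rho> - \<mu>) \<bullet> \<alpha> = 0" for \<alpha>
  proof -
    have "\<rho> \<bullet> \<alpha> \<ge> 0" "\<mu> \<bullet> \<alpha> \<le> 0" using \<rho> \<mu> that(1) simple_roots_Rpos by auto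
    then have "\<mu> \<bullet> \<alpha> = 0" using that(2) by (simp add: inner_diff_left)
    then show ?thesis by (rule refl_orthogonal)
  qed
  then have "g \<mu> = \<mu>" using refl_group_fixes[OF stab] by blast
  with eq show ?thesis by simp
qed

lemma shifted_parabolic_orbit_eq_imp_eq:
  assumes k: "multiplicity R k" and I: "I \<subseteq> S"
    and l: "l \<in> parabolic_dominant R h I" and m: "m \<in> parabolic_dominant R h I"
    and u: "u \<in> refl_group I" and eq: "u (shifted R h k l) = shifted R h k m"
  shows "l = m"
proof -
  define v v' where "v = vmin R h l" and "v' = vmin R h m"
  have lattice: "l \<in> weight_lattice R" "m \<in> weight_lattice R"
    using l m by (auto simp: parabolic_dominant_def)
  have v: "v \<in> W" "\<forall>\<beta>\<in>Rpos. v l \<bullet> \<beta> \<le> 0" and v': "v' \<in> W" "\<forall>\<beta>\<in>Rpos. v' m \<bullet> \<beta> \<le> 0"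
    using vmin_spec[OF lattice(1)] vmin_spec[OF lattice(2)] mem_antidominant_iff
    by (simp_all add: v_def v'_def)
  have uW: "u \<in> W" using u I simple_refl_group_in_W by blast
  define g where "g = v' \<circ> u \<circ> inv v"
  have gW: "g \<in> W" unfolding g_def using v(1) v'(1) uW inv_in_refl_group refl_group_comp by blast
  have "g (v l - rho R h k) = v' (u (shifted R h k l))"
    using shifted_eq_inv_vmin[OF lattice(1)] by (simp add: g_def v_def)
  also have "\<dots> = v' m - rho R h k"
    using eq shifted_eq_inv_vmin[OF lattice(2)] v'(1) by (simp add: v'_def)
  finally have "v l = v' m \<and> g (v l) = v l"
    using antidominant_shift_orbit[OF _ v(2) v'(2) gW] rho_dominant[OF k] by blast
  then have "v' (u l) = v' m" using v(1) by (simp add: g_def)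
  then have "u l = m" using v'(1) by (metis refl_group_inv_apply)
  moreover have "\<forall>\<beta>\<in>Rpos \<inter> span I. l \<bullet> \<beta> \<ge> 0" "\<forall>\<beta>\<in>Rpos \<inter> span I. m \<bullet> \<beta> \<ge> 0"
    using l m by (auto simp: parabolic_dominant_def parabolic_pos_roots_def)
  ultimately show "l = m"
    using parabolic_fundamental_domain[OF I _ _ u] by blast
qed

end

theorem mainTheorem9:
  fixes R :: "'a::euclidean_space set" and h :: 'a and k :: "'a \<Rightarrow> real" and I :: "'a set"
  assumes "root_system R"
    and "\<forall>\<alpha>\<in>R. \<alpha> \<bullet> h \<noteq> 0"
    and "multiplicity R k"
    and "I \<subseteq> simple_roots R h"
  shows "\<forall>l\<in>parabolic_dominant R h I. \<forall>m\<in>parabolic_dominant R h I. l \<noteq> m \<longrightarrow>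
    (\<exists>q\<in>poly_fun. (\<forall>w\<in>refl_group I. \<forall>x. q (w x) = q x) \<and>
        q (shifted R h k l) \<noteq> q (shifted R h k m))"
proof (intro ballI impI)
  fix l m
  assume l: "l \<in> parabolic_dominant R h I" and m: "m \<in> parabolic_dominant R h I" and "l \<noteq> m"
  interpret based_root_system R h using assms(1,2) by unfold_locales
  have fin: "finite (refl_group I)"
    using simple_refl_group_in_W[OF _ assms(4)] by (blast intro: finite_subset[OF _ finite_W])
  let ?q = "orbit_poly I (shifted R h k m)"
  have "?q (shifted R h k m) = 0"
    unfolding orbit_poly_eq_0_iff[OF fin] using refl_group.id by (intro bexI[of _ id]) simp_all
  moreover have "?q (shifted R h k l) \<noteq> 0"
    unfolding orbit_poly_eq_0_iff[OF fin]
    using shifted_parabolic_orbit_eq_imp_eq[OF assms(3,4) l m] \<open>l \<noteq> m\<close> by blast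
  moreover have "\<forall>w\<in>refl_group I. \<forall>x. ?q (w x) = ?q x"
    using orbit_poly_invariant by blast
  ultimately show "\<exists>q\<in>poly_fun. (\<forall>w\<in>refl_group I. \<forall>x. q (w x) = q x) \<and>
      q (shifted R h k l) \<noteq> q (shifted R h k m)"
    using orbit_poly_in_poly_fun[OF fin] by (intro bexI[of _ ?q] conjI) simp_all
qed

end
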